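(* Let $m,n\ge0$, $0\le k\le\min(m,n)$, and let $i,j$ be integers with $0\le i\le m$, $0\le j\le n$, $k\le i+j\le m+n-k$. Then $$\binom{m+n-k}{i,\ j,\ m+n-k-i-j}\,c_{m,n,k}(m-i,\,n-j)=(-1)^k\binom{m+n-k}{m-i,\ n-j,\ i+j-k}\,c_{m,n,k}(i,j).$$
   Context: Multinomial coefficients: $\binom{a+b+c}{a,\ b,\ c}=\frac{(a+b+c)!}{a!\,b!\,c!}$ for nonnegative $a,b,c$. Let $e,f,h$ be the standard basis of $\mathfrak{sl}(2,\mathbb{C})$. $V(n)$ is the irreducible representation of highest weight $n$ with fixed highest weight vector $\phi_n$; $\{f^i\phi_n\}_{0\le i\le n}$ is a basis, $f^{n+1}\phi_n=0$. $\mathfrak{sl}(2)$ acts on $V(m)\otimes V(n)$ by $X(v\otimes w)=Xv\otimes w+v\otimes Xw$. For any $m,n\ge 0$ and $0\le k\le\min(m,n)$, $\phi_{m,n,k}=\sum_{l=0}^{k}(-1)^l\binom{m-l}{k-l}\binom{n-k+l}{l} f^l\phi_m\otimes f^{k-l}\phi_n\in V(m)\otimes V(n)$ (a highest weight vector of weight $m+n-2k$). The coordinates $c_{m,n,k}(i,j)$ are defined by $f^{p-k}\phi_{m,n,k}=\sum_{i+j=p,\,0\le i\le m,\,0\le j\le n} c_{m,n,k}(i,j)\, f^i\phi_m\otimes f^j\phi_n$ for $k\le p\le m+n-k$. *)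

theory Defs
  imports Complex_Main
begin

definition multinom3 :: "nat \<Rightarrow> nat \<Rightarrow> nat \<Rightarrow> nat" where
  "multinom3 a b c = fact (a + b + c) div (fact a * fact b * fact c)"

text \<open>An element of V(m) \<otimes> V(n) is represented by its coordinate function with respect to
  the basis f^i phi_m \<otimes> f^j phi_n (0 \<le> i \<le> m, 0 \<le> j \<le> n); coordinates outside this range are 0.\<close>
type_synonym tens = "nat \<times> nat \<Rightarrow> complex"

text \<open>Basis vector f^i phi_m \<otimes> f^j phi_n (zero if out of range, since f^(m+1) phi_m = 0).\<close>
definition basis_t :: "nat \<Rightarrow> nat \<Rightarrow> nat \<Rightarrow> nat \<Rightarrow> tens" where
  "basis_t m n i j = (\<lambda>(a,b). if a = i \<and> b = j \<and> i \<le> m \<and> j \<le> n then 1 else 0)"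

text \<open>Action of f on V(m) \<otimes> V(n): f(v \<otimes> w) = fv \<otimes> w + v \<otimes> fw with f (f^i phi_m) = f^(i+1) phi_m,
  which is 0 when i = m. In coordinates:\<close>
definition f_act :: "nat \<Rightarrow> nat \<Rightarrow> tens \<Rightarrow> tens" where
  "f_act m n x = (\<lambda>(a,b). if a \<le> m \<and> b \<le> n then
       (if a \<ge> 1 then x (a - 1, b) else 0) + (if b \<ge> 1 then x (a, b - 1) else 0) else 0)"

definition phi :: "nat \<Rightarrow> nat \<Rightarrow> nat \<Rightarrow> tens" where
  "phi m n k = (\<lambda>ab. \<Sum>l=0..k. (-1)^l * of_nat ((m - l) choose (k - l)) * of_nat ((n - k + l) choose l)
                       * basis_t m n l (k - l) ab)"

definition coef :: "nat \<Rightarrow> nat \<Rightarrow> nat \<Rightarrow> nat \<Rightarrow> nat \<Rightarrow> complex" where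
  "coef m n k i j = ((f_act m n ^^ (i + j - k)) (phi m n k)) (i, j)"

end

theory Submission imports Defs begin

text \<open>
  Write K = k! (m-k)! (n-k)!. The normalised coordinate K c(i,j) equals (i+j-k)! (m-i)! (n-j)!
  times the alternating sum S(i,j) = sum over l of (-1)^l C(k,l) C(m-k, i-l) C(n-k, j-k+l):
  both sides agree on the line i + j = k, where they come from the explicit formula for the
  highest weight vector, and both satisfy the recurrence induced by the action of f.
  Reversing the summation index gives S(m-i, n-j) = (-1)^k S(i,j), and multiplying the closed form
  by the multinomial coefficients turns both sides of the identity into (m+n-k)! S(i,j), up to the
  sign (-1)^k.
\<close>

definition choose_int :: "nat \<Rightarrow> int \<Rightarrow> int" where
  "choose_int a r = (if r < 0 then 0 else int (a choose nat r))"

lemma choose_int_absorption: "r * choose_int a r = (int a - r + 1) * choose_int a (r - 1)"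
proof (cases "r \<le> 0")
  case True
  then show ?thesis by (cases "r = 0") (simp_all add: choose_int_def)
next
  case False
  then obtain t where r: "r = int (Suc t)" by (metis gr0_implies_Suc not_le of_nat_0_less_iff pos_int_cases)
  have "Suc t * (a choose Suc t) = (a - t) * (a choose t)"
    using binomial_absorption[of t a] binomial_absorb_comp[of a t] by simp
  then have "int (Suc t) * int (a choose Suc t) = (int a - int t) * int (a choose t)"
    by (cases "t \<le> a") (simp_all only: of_nat_mult [symmetric] of_nat_diff [symmetric] binomial_eq_0 not_le
                                           mult_0_right)
  then show ?thesis by (simp add: choose_int_def r nat_add_distrib)
qed

lemma choose_int_symmetric: "choose_int a (int a - r) = choose_int a r"
proof -
  consider "r < 0" | "r > int a" | t where "r = int t" "t \<le> a"
    by (metis linorder_not_le nat_0_le nat_le_iff)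
  then show ?thesis
    by cases (simp_all add: choose_int_def binomial_symmetric[symmetric] of_nat_diff[symmetric]
                  del: of_nat_diff)
qed

lemma alternating_binomial_telescope:
  fixes g :: "int \<Rightarrow> int"
  shows "(\<Sum>l=0..k. (-1)^l * int (k choose l) * (int (k - l) * g (int l) + int l * g (int l - 1))) = 0"
proof (cases k)
  case 0
  then show ?thesis by simp
next
  case (Suc k')
  have absorb: "int (k choose l) * int (k - l) = int (k choose Suc l) * int (Suc l)" for l
    using binomial_absorption[of l k] binomial_absorb_comp[of k l]
    by (metis mult.commute of_nat_mult)
  have "(\<Sum>l=0..k. (-1)^l * int (k choose l) * (int (k - l) * g (int l) + int l * g (int l - 1)))
     = (\<Sum>l=0..k. (-1)^l * int (k choose l) * int (k - l) * g (int l))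
       + (\<Sum>l=0..k. (-1)^l * int (k choose l) * int l * g (int l - 1))"
    by (simp add: sum.distrib[symmetric] algebra_simps)
  also have "(\<Sum>l=0..k. (-1)^l * int (k choose l) * int (k - l) * g (int l))
      = (\<Sum>l=0..k'. (-1)^l * int (k choose l) * int (k - l) * g (int l))"
    unfolding Suc by (simp del: binomial_Suc_Suc)
  also have "\<dots> = (\<Sum>l=0..k'. (-1)^l * int (k choose Suc l) * int (Suc l) * g (int l))"
    by (intro sum.cong refl) (metis absorb mult.assoc)
  also have "(\<Sum>l=0..k. (-1)^l * int (k choose l) * int l * g (int l - 1))
      = - (\<Sum>l=0..k'. (-1)^l * int (k choose Suc l) * int (Suc l) * g (int l))"
    using Suc by (simp only: sum.atLeast0_atMost_Suc_shift) (simp add: sum_negf)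
  finally show ?thesis by simp
qed

definition coef_sum :: "nat \<Rightarrow> nat \<Rightarrow> nat \<Rightarrow> int \<Rightarrow> int \<Rightarrow> int" where
  "coef_sum k a b x y =
     (\<Sum>l=0..k. (-1)^l * int (k choose l) * choose_int a (x - int l) * choose_int b (y - int k + int l))"

lemma coef_sum_neg_fst: "x < 0 \<Longrightarrow> coef_sum k a b x y = 0"
  unfolding coef_sum_def by (intro sum.neutral) (simp add: choose_int_def)

lemma coef_sum_neg_snd: "y < 0 \<Longrightarrow> coef_sum k a b x y = 0"
  unfolding coef_sum_def by (intro sum.neutral) (simp add: choose_int_def)

lemma coef_sum_recurrence:
  "(x + y - int k) * coef_sum k a b x y
     = (int a + int k - x + 1) * coef_sum k a b (x - 1) y + (int b + int k - y + 1) * coef_sum k a b x (y - 1)"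
proof -
  define g where "g = (\<lambda>l'. choose_int a (x - 1 - l') * choose_int b (y - int k + l'))"
  define t where "t = (\<lambda>l. (-1)^l * int (k choose l))"
  have summand: "(int a + int k - x + 1) * (t l * choose_int a (x - 1 - int l) * choose_int b (y - int k + int l))
     + (int b + int k - y + 1) * (t l * choose_int a (x - int l) * choose_int b (y - 1 - int k + int l))
     = (x + y - int k) * (t l * choose_int a (x - int l) * choose_int b (y - int k + int l))
       + t l * (int (k - l) * g (int l) + int l * g (int l - 1))"
    if "l \<le> k" for l
  proof -
    define A0 A1 B0 B1 where "A0 = choose_int a (x - int l)" and "A1 = choose_int a (x - int l - 1)"
      and "B0 = choose_int b (y - int k + int l)" and "B1 = choose_int b (y - int k + int l - 1)"
    have "(x - int l) * A0 = (int a - (x - int l) + 1) * A1"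
      "(y - int k + int l) * B0 = (int b - (y - int k + int l) + 1) * B1"
      unfolding A0_def A1_def B0_def B1_def by (rule choose_int_absorption)+
    moreover have "g (int l) = A1 * B0" "g (int l - 1) = A0 * B1"
      "choose_int a (x - 1 - int l) = A1" "choose_int b (y - 1 - int k + int l) = B1"
      unfolding g_def A0_def A1_def B0_def B1_def by (simp_all add: algebra_simps)
    moreover have "int (k - l) = int k - int l" using that by simp
    ultimately show ?thesis by (simp only: flip: A0_def B0_def) algebra
  qed
  have "(int a + int k - x + 1) * coef_sum k a b (x - 1) y + (int b + int k - y + 1) * coef_sum k a b x (y - 1)
     = (\<Sum>l=0..k. (int a + int k - x + 1) * (t l * choose_int a (x - 1 - int l) * choose_int b (y - int k + int l))
         + (int b + int k - y + 1) * (t l * choose_int a (x - int l) * choose_int b (y - 1 - int k + int l)))"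
    by (simp add: coef_sum_def t_def sum.distrib sum_distrib_left)
  also have "\<dots> = (\<Sum>l=0..k. (x + y - int k) * (t l * choose_int a (x - int l) * choose_int b (y - int k + int l))
       + t l * (int (k - l) * g (int l) + int l * g (int l - 1)))"
    by (intro sum.cong refl) (simp add: summand)
  also have "\<dots> = (x + y - int k) * coef_sum k a b x y"
    using alternating_binomial_telescope[of k g]
    by (simp add: coef_sum_def t_def sum.distrib sum_distrib_left mult.assoc)
  finally show ?thesis ..
qed

lemma coef_sum_reflect:
  "coef_sum k a b (int a + int k - x) (int b + int k - y) = (-1)^k * coef_sum k a b x y"
proof -
  have "coef_sum k a b (int a + int k - x) (int b + int k - y)
      = (\<Sum>l=0..k. (-1)^(k - l) * int (k choose (k - l)) * choose_int a (int a + int k - x - int (k - l))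
                   * choose_int b (int b + int k - y - int k + int (k - l)))"
    unfolding coef_sum_def by (rule sum.reindex_bij_witness[where i="\<lambda>l. k - l" and j="\<lambda>l. k - l"]) auto
  also have "\<dots> = (\<Sum>l=0..k. (-1)^k * ((-1)^l * int (k choose l) * choose_int a (x - int l)
                   * choose_int b (y - int k + int l)))"
  proof (rule sum.cong[OF refl])
    fix l assume "l \<in> {0..k}"
    then have lk: "l \<le> k" by simp
    have sign: "(-1::int)^(k - l) = (-1)^k * (-1)^l"
      using lk by (simp flip: neg_one_power_add_eq_neg_one_power_diff add: power_add)
    have args: "int a + int k - x - int (k - l) = int a - (x - int l)"
      "int b + int k - y - int k + int (k - l) = int b - (y - int k + int l)"
      using lk by simp_all
    show "(-1)^(k - l) * int (k choose (k - l)) * choose_int a (int a + int k - x - int (k - l))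
        * choose_int b (int b + int k - y - int k + int (k - l))
      = (-1)^k * ((-1)^l * int (k choose l) * choose_int a (x - int l) * choose_int b (y - int k + int l))"
      unfolding sign args choose_int_symmetric binomial_symmetric[OF lk, symmetric] by (simp only: mult_ac)
  qed
  also have "\<dots> = (-1)^k * coef_sum k a b x y" unfolding coef_sum_def by (simp add: sum_distrib_left)
  finally show ?thesis .
qed

lemma coef_step:
  assumes "i \<le> m" "j \<le> n" "k < i + j"
  shows "coef m n k i j
    = (if 1 \<le> i then coef m n k (i - 1) j else 0) + (if 1 \<le> j then coef m n k i (j - 1) else 0)"
proof -
  obtain q where q: "i + j - k = Suc q" using assms(3) by (cases "i + j - k") auto
  then have "1 \<le> i \<Longrightarrow> i - 1 + j - k = q" "1 \<le> j \<Longrightarrow> i + (j - 1) - k = q" by auto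
  with q show ?thesis using assms by (auto simp: coef_def f_act_def)
qed

lemma fact_mult_choose_mult_choose:
  assumes "i \<le> k" "k \<le> m" "k \<le> n"
  shows "fact k * fact (m - k) * fact (n - k) * ((m - i) choose (k - i)) * ((n - k + i) choose i)
       = (fact (m - i) * fact (n - k + i) * (k choose i) :: nat)"
proof -
  have e1: "fact (k - i) * fact (m - k) * ((m - i) choose (k - i)) = (fact (m - i) :: nat)"
    using binomial_fact_lemma[of "k - i" "m - i"] assms by simp
  have e2: "fact i * fact (n - k) * ((n - k + i) choose i) = (fact (n - k + i) :: nat)"
    using binomial_fact_lemma[of i "n - k + i"] assms by simp
  have "fact k * fact (m - k) * fact (n - k) * ((m - i) choose (k - i)) * ((n - k + i) choose i)
      = fact i * fact (k - i) * (k choose i) * fact (m - k) * fact (n - k) * ((m - i) choose (k - i))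
        * ((n - k + i) choose i)"
    using binomial_fact_lemma[of i k] assms by simp
  also have "\<dots> = (fact (k - i) * fact (m - k) * ((m - i) choose (k - i)))
      * (fact i * fact (n - k) * ((n - k + i) choose i)) * (k choose i)"
    by (simp only: ac_simps)
  finally show ?thesis by (simp only: e1 e2)
qed

lemma coef_closed_form_initial:
  assumes "i \<le> k" "k \<le> m" "k \<le> n"
  shows "of_nat (fact k * fact (m - k) * fact (n - k)) * coef m n k i (k - i)
    = of_int (int (fact (m - i) * fact (n - (k - i))) * coef_sum k (m - k) (n - k) (int i) (int (k - i)))"
proof -
  have "coef m n k i (k - i) = phi m n k (i, k - i)" using assms by (simp add: coef_def)
  also have "\<dots> = (\<Sum>l=0..k. if l = i
      then (-1)^i * of_nat ((m - i) choose (k - i)) * of_nat ((n - k + i) choose i) else 0)"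
    unfolding phi_def using assms by (intro sum.cong refl) (auto simp: basis_t_def)
  finally have coef_eq: "coef m n k i (k - i)
      = (-1)^i * of_nat ((m - i) choose (k - i)) * of_nat ((n - k + i) choose i)"
    using assms by simp
  have "coef_sum k (m - k) (n - k) (int i) (int (k - i))
      = (\<Sum>l=0..k. if l = i then (-1)^i * int (k choose i) else 0)"
    unfolding coef_sum_def using assms by (intro sum.cong refl) (auto simp: choose_int_def of_nat_diff)
  then have sum_eq: "coef_sum k (m - k) (n - k) (int i) (int (k - i)) = (-1)^i * int (k choose i)"
    using assms by simp
  have "of_nat (fact k * fact (m - k) * fact (n - k)) * coef m n k i (k - i)
      = (-1)^i * of_nat (fact k * fact (m - k) * fact (n - k) * ((m - i) choose (k - i)) * ((n - k + i) choose i))"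
    unfolding coef_eq by (simp only: of_nat_mult mult_ac)
  also have "\<dots> = (-1)^i * of_nat (fact (m - i) * fact (n - k + i) * (k choose i))"
    by (simp only: fact_mult_choose_mult_choose[OF assms])
  finally show ?thesis
    using assms unfolding sum_eq by simp
qed

lemma int_fact_diff_pred:
  assumes "1 \<le> i" "i \<le> m"
  shows "int (fact (m - (i - 1))) = (int m - int i + 1) * int (fact (m - i))"
proof -
  have "m - (i - 1) = Suc (m - i)" using assms by simp
  then have "int (fact (m - (i - 1))) = int (Suc (m - i)) * int (fact (m - i))"
    by (simp only: fact_Suc of_nat_id of_nat_mult)
  also have "int (Suc (m - i)) = int m - int i + 1" using assms by simp
  finally show ?thesis .
qed

lemma coef_closed_form:
  assumes "k \<le> m" "k \<le> n" "i \<le> m" "j \<le> n" "k \<le> i + j"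
  shows "of_nat (fact k * fact (m - k) * fact (n - k)) * coef m n k i j
    = of_int (int (fact (i + j - k) * fact (m - i) * fact (n - j)) * coef_sum k (m - k) (n - k) (int i) (int j))"
proof -
  define K :: complex where "K = of_nat (fact k * fact (m - k) * fact (n - k))"
  define S where "S = coef_sum k (m - k) (n - k)"
  have "K * coef m n k i j = of_int (int (fact q * fact (m - i) * fact (n - j)) * S (int i) (int j))"
    if "i + j = k + q" "i \<le> m" "j \<le> n" for q i j
    using that
  proof (induction q arbitrary: i j)
    case 0
    then have "i \<le> k" "j = k - i" by auto
    then show ?case using coef_closed_form_initial[of i k m n] assms unfolding K_def S_def by simp
  next
    case (Suc q)
    define F :: nat where "F = fact q * fact (m - i) * fact (n - j)"
    have left: "K * (if 1 \<le> i then coef m n k (i - 1) j else 0)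
        = of_int (int F * ((int m - int i + 1) * S (int i - 1) (int j)))"
    proof (cases "1 \<le> i")
      case True
      have "K * coef m n k (i - 1) j = of_int (int (fact q * fact (m - (i - 1)) * fact (n - j)) * S (int (i - 1)) (int j))"
        by (rule Suc.IH) (use Suc.prems True in auto)
      also have "\<dots> = of_int (int F * ((int m - int i + 1) * S (int i - 1) (int j)))"
        using True unfolding F_def of_nat_mult int_fact_diff_pred[OF True Suc.prems(2)]
        by (simp add: mult_ac)
      finally show ?thesis using True by simp
    qed (simp add: S_def coef_sum_neg_fst)
    have right: "K * (if 1 \<le> j then coef m n k i (j - 1) else 0)
        = of_int (int F * ((int n - int j + 1) * S (int i) (int j - 1)))"
    proof (cases "1 \<le> j")
      case True
      have "K * coef m n k i (j - 1) = of_int (int (fact q * fact (m - i) * fact (n - (j - 1))) * S (int i) (int (j - 1)))"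
        by (rule Suc.IH) (use Suc.prems True in auto)
      also have "\<dots> = of_int (int F * ((int n - int j + 1) * S (int i) (int j - 1)))"
        using True unfolding F_def of_nat_mult int_fact_diff_pred[OF True Suc.prems(3)]
        by (simp add: mult_ac)
      finally show ?thesis using True by simp
    qed (simp add: S_def coef_sum_neg_snd)
    have ij: "k < i + j" using Suc.prems by simp
    have rec: "(int m - int i + 1) * S (int i - 1) (int j) + (int n - int j + 1) * S (int i) (int j - 1)
        = int (Suc q) * S (int i) (int j)"
    proof -
      have "int i + int j - int k = int (Suc q)" using Suc.prems by simp
      then show ?thesis using coef_sum_recurrence[of "int i" "int j" k "m - k" "n - k"] assms(1,2)
        unfolding S_def by (simp add: of_nat_diff)
    qed
    have "K * coef m n k i j = of_int (int F * (int (Suc q) * S (int i) (int j)))"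
      unfolding coef_step[OF Suc.prems(2,3) ij] distrib_left left right rec[symmetric]
      by (simp only: of_int_add)
    also have "\<dots> = of_int (int (fact (Suc q) * fact (m - i) * fact (n - j)) * S (int i) (int j))"
      unfolding F_def by (simp only: fact_Suc of_nat_id of_nat_mult mult_ac)
    finally show ?case .
  qed
  from this[of i j "i + j - k"] show ?thesis using assms unfolding K_def S_def by simp
qed

lemma multinom3_mult_fact: "multinom3 a b c * (fact a * fact b * fact c) = fact (a + b + c)"
proof -
  have ab: "fact (a + b) = fact a * fact b * ((a + b) choose a)"
    using binomial_fact_lemma[of a "a + b"] by simp
  have "fact (a + b + c) = fact c * fact (a + b) * ((a + b + c) choose c)"
    using binomial_fact_lemma[of c "a + b + c"] by simp
  then have "fact (a + b + c) = fact a * fact b * fact c * (((a + b) choose a) * ((a + b + c) choose c))"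
    unfolding ab by (simp only: mult_ac)
  then have "fact a * fact b * fact c dvd (fact (a + b + c) :: nat)" by (rule dvdI)
  then show ?thesis unfolding multinom3_def by simp
qed

lemma multinom3_mult_coef:
  assumes "k \<le> m" "k \<le> n" "i \<le> m" "j \<le> n" "k \<le> i + j" "i + j \<le> m + n - k"
  shows "of_nat (fact k * fact (m - k) * fact (n - k))
           * (of_nat (multinom3 (m - i) (n - j) (i + j - k)) * coef m n k i j)
       = of_nat (fact (m + n - k)) * of_int (coef_sum k (m - k) (n - k) (int i) (int j))"
proof -
  have "m - i + (n - j) + (i + j - k) = m + n - k" using assms by simp
  then have fact_eq: "multinom3 (m - i) (n - j) (i + j - k) * (fact (i + j - k) * fact (m - i) * fact (n - j))
      = fact (m + n - k)"
    using multinom3_mult_fact[of "m - i" "n - j" "i + j - k"] by (simp add: mult_ac)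
  have "of_nat (fact k * fact (m - k) * fact (n - k))
           * (of_nat (multinom3 (m - i) (n - j) (i + j - k)) * coef m n k i j)
      = of_nat (multinom3 (m - i) (n - j) (i + j - k))
           * (of_nat (fact k * fact (m - k) * fact (n - k)) * coef m n k i j)"
    by (simp only: mult_ac)
  also have "\<dots> = of_nat (multinom3 (m - i) (n - j) (i + j - k) * (fact (i + j - k) * fact (m - i) * fact (n - j)))
      * of_int (coef_sum k (m - k) (n - k) (int i) (int j))"
    unfolding coef_closed_form[OF assms(1-5)] by (simp only: of_int_mult of_int_of_nat_eq of_nat_mult mult_ac)
  finally show ?thesis unfolding fact_eq .
qed

theorem proposition8p4:
  fixes m n k i j :: nat
  assumes "k \<le> min m n" and "i \<le> m" and "j \<le> n"
    and "k \<le> i + j" and "i + j \<le> m + n - k"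
  shows "of_nat (multinom3 i j (m + n - k - i - j)) * coef m n k (m - i) (n - j)
       = (-1)^k * of_nat (multinom3 (m - i) (n - j) (i + j - k)) * coef m n k i j"
proof -
  have km: "k \<le> m" and kn: "k \<le> n" using assms(1) by simp_all
  define K :: complex where "K = of_nat (fact k * fact (m - k) * fact (n - k))"
  define S where "S = coef_sum k (m - k) (n - k)"
  have "m - (m - i) = i" "n - (n - j) = j" "m - i + (n - j) - k = m + n - k - i - j"
    using assms km by simp_all
  then have "K * (of_nat (multinom3 i j (m + n - k - i - j)) * coef m n k (m - i) (n - j))
      = of_nat (fact (m + n - k)) * of_int (S (int (m - i)) (int (n - j)))"
    using multinom3_mult_coef[of k m n "m - i" "n - j"] assms km kn unfolding K_def S_def by simp
  also have "S (int (m - i)) (int (n - j)) = (-1)^k * S (int i) (int j)"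
    using coef_sum_reflect[of k "m - k" "n - k" "int i" "int j"] assms km kn
    unfolding S_def by (simp add: of_nat_diff)
  also have "of_nat (fact (m + n - k)) * of_int ((-1)^k * S (int i) (int j))
      = K * ((-1)^k * of_nat (multinom3 (m - i) (n - j) (i + j - k)) * coef m n k i j)"
    using multinom3_mult_coef[of k m n i j] assms km kn unfolding K_def S_def by (simp add: mult_ac)
  finally show ?thesis unfolding K_def by simp
qed

end
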